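(* Let $n,m,q,L\ge 1$ and let $X\in\mathbb{R}^{n\times L}$, $U\in\mathbb{R}^{m\times L}$, $V\in\mathbb{R}^{q\times L}$, $E\in\mathbb{R}^{n\times q}$, $\mathcal{D}_{11}\in\mathbb{R}^{L\times L}$ be given, and let $\Sigma=\{(A,B)\in\mathbb{R}^{n\times n}\times\mathbb{R}^{n\times m}: X\mathcal{D}_{11}=AX+BU+EV\}$, assumed nonempty. Then the data $(X,U)$ are informative for stabilization (there exists $K\in\mathbb{R}^{m\times n}$ such that $A+BK$ is Hurwitz for all $(A,B)\in\Sigma$) if and only if there exists $\theta\in\mathbb{R}^{L\times n}$ with $X\theta=(X\theta)^{T}>0$ and $\theta^{T}(X\mathcal{D}_{11}-EV)^{T}+(X\mathcal{D}_{11}-EV)\theta<0$. Furthermore, for such $\theta$ the gain $K=U\theta(X\theta)^{-1}$ (which equals $UX^{+}$ with the right inverse $X^{+}=\theta(X\theta)^{-1}$ of $X$) makes $A+BK$ Hurwitz for all $(A,B)\in\Sigma$.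
   Context: The data arise from an agent $\dot x=\bar Ax+\bar Bu+Ev$ with unknown $(\bar A,\bar B)$ and known $E$, where $X,U,V$ collect the first $L$ coefficients of $x,u,v$ in a (Chebyshev) orthogonal polynomial basis and $\mathcal{D}_{11}$ is the leading $L\times L$ block of the basis differentiation matrix; in the noise-free case $(\bar A,\bar B)\in\Sigma$. Hurwitz means all eigenvalues have negative real part; $>0$ / $<0$ denote positive / negative definiteness of symmetric matrices. *)

theory Defs
  imports "HOL-Analysis.Analysis"
begin

definition cmat :: "real^'n^'m \<Rightarrow> complex^'n^'m" where
  "cmat M = (\<chi> i j. complex_of_real (M $ i $ j))"

definition eigenvalue :: "real^'n^'n \<Rightarrow> complex \<Rightarrow> bool" where
  "eigenvalue M c \<longleftrightarrow> (\<exists>v::complex^'n. v \<noteq> 0 \<and> cmat M *v v = c *s v)"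

definition hurwitz :: "real^'n^'n \<Rightarrow> bool" where
  "hurwitz M \<longleftrightarrow> (\<forall>c. eigenvalue M c \<longrightarrow> Re c < 0)"

definition pos_def :: "real^'n^'n \<Rightarrow> bool" where
  "pos_def M \<longleftrightarrow> transpose M = M \<and> (\<forall>x. x \<noteq> 0 \<longrightarrow> x \<bullet> (M *v x) > 0)"

definition neg_def :: "real^'n^'n \<Rightarrow> bool" where
  "neg_def M \<longleftrightarrow> transpose M = M \<and> (\<forall>x. x \<noteq> 0 \<longrightarrow> x \<bullet> (M *v x) < 0)"

definition Sigma_data ::
  "real^'l^'n \<Rightarrow> real^'l^'m \<Rightarrow> real^'l^'q \<Rightarrow> real^'q^'n \<Rightarrow> real^'l^'l
   \<Rightarrow> ((real^'n^'n) \<times> (real^'m^'n)) set" where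
  "Sigma_data X U V E D11 = {(A, B). X ** D11 = A ** X + B ** U + E ** V}"

end

theory Submission
  imports Defs "Jordan_Normal_Form.Schur_Decomposition"
begin

(* Both directions rest on Lyapunov's theorem: a real matrix N is Hurwitz iff N P + P N^T < 0
   for some P > 0.  With W = X D11 - E V, Sigma is the set of (A, B) with A X + B U = W.
   If theta solves the LMI and K = U theta (X theta)^-1, then (A + B K) X theta = W theta for
   every (A, B) in Sigma, so P = X theta is a Lyapunov matrix for A + B K.
   Conversely, let K stabilise all of Sigma.  If rho1^T X + rho2^T U = 0 but rho1 + K^T rho2
   is nonzero, a rank-one perturbation of a system in Sigma along (rho1, rho2) stays in Sigma
   and makes A + B K singular.  Hence [I; K] lies in the column space of [X; U], i.e.
   X Theta = I and U Theta = K for some Theta, and theta = Theta P solves the LMI for any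
   Lyapunov matrix P of A + B K.
   The converse Lyapunov theorem comes from a complex Schur form A P = P B: scaling the k-th
   Schur coordinate by r^k with r small makes the diagonal of B, whose real parts are
   negative, dominate its strictly upper triangular part. *)

no_notation vec_index (infixl \<open>$\<close> 100)
no_notation scalar_prod (infix \<open>\<bullet>\<close> 70)
hide_const (open) Matrix.mat

lemma matrix_add_rdistrib: "(B + C) ** A = B ** A + C ** (A :: 'a::semiring_1^_^_)"
  by (vector matrix_matrix_mult_def sum.distrib[symmetric] field_simps)

lemma transpose_add: "transpose (A + B) = transpose A + transpose (B :: 'a::semiring_1^'n^'m)"
  by (simp add: transpose_def Finite_Cartesian_Product.vec_eq_iff)

lemma matrix_inv:
  assumes "invertible A"
  shows matrix_inv_right: "A ** matrix_inv A = mat 1"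
    and matrix_inv_left: "matrix_inv A ** A = mat 1"
  using someI_ex[OF assms[unfolded invertible_def]] unfolding matrix_inv_def by auto

lemma pos_def_invertible:
  assumes "pos_def P"
  shows "invertible P"
proof -
  have "inj ((*v) P)"
  proof (rule injI)
    fix x y assume "P *v x = P *v y"
    then have "(x - y) \<bullet> (P *v (x - y)) = 0"
      by (simp add: matrix_vector_mult_diff_distrib)
    then show "x = y"
      using assms unfolding pos_def_def by (metis less_irrefl right_minus_eq)
  qed
  then show ?thesis
    using matrix_left_invertible_injective invertible_left_inverse by blast
qed

section \<open>Hermitian forms of real matrices\<close>

lemma cmat_mult: "cmat (A ** B) = cmat A ** cmat B"
  unfolding cmat_def matrix_matrix_mult_def by (simp add: Finite_Cartesian_Product.vec_eq_iff)

lemma cmat_one: "cmat (mat 1 :: real^'n^'n) = mat 1"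
  unfolding cmat_def Finite_Cartesian_Product.mat_def
  by (simp add: Finite_Cartesian_Product.vec_eq_iff)

lemma cmat_add: "cmat (A + B) = cmat A + cmat B"
  unfolding cmat_def by (simp add: Finite_Cartesian_Product.vec_eq_iff)

definition herm_form :: "real^'n^'n \<Rightarrow> complex^'n \<Rightarrow> complex" where
  "herm_form G u = (\<Sum>i\<in>UNIV. cnj (u $ i) * (cmat G *v u) $ i)"

lemma herm_form_expand:
  "herm_form G u = (\<Sum>i\<in>UNIV. \<Sum>j\<in>UNIV. cnj (u $ i) * of_real (G $ i $ j) * u $ j)"
  unfolding herm_form_def cmat_def matrix_vector_mult_def
  by (simp add: sum_distrib_left mult.assoc)

lemma Re_herm_form:
  "Re (herm_form G u) = (\<chi> i. Re (u $ i)) \<bullet> (G *v (\<chi> i. Re (u $ i)))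
                      + (\<chi> i. Im (u $ i)) \<bullet> (G *v (\<chi> i. Im (u $ i)))"
proof -
  have "Re (herm_form G u) = (\<Sum>i\<in>UNIV. \<Sum>j\<in>UNIV.
          G $ i $ j * (Re (u $ i) * Re (u $ j)) + G $ i $ j * (Im (u $ i) * Im (u $ j)))"
    unfolding herm_form_expand Re_sum by (intro sum.cong refl) (simp add: algebra_simps)
  then show ?thesis
    unfolding inner_vec_def matrix_vector_mult_def
    by (simp add: sum.distrib sum_distrib_left algebra_simps)
qed

lemma herm_form_transpose: "herm_form (transpose G) u = cnj (herm_form G u)"
proof -
  have "herm_form (transpose G) u = (\<Sum>i\<in>UNIV. \<Sum>j\<in>UNIV. cnj (u $ i) * of_real (G $ j $ i) * u $ j)"
    unfolding herm_form_expand by (simp add: transpose_def)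
  also have "\<dots> = (\<Sum>j\<in>UNIV. \<Sum>i\<in>UNIV. cnj (u $ i) * of_real (G $ j $ i) * u $ j)"
    by (rule sum.swap)
  also have "\<dots> = cnj (herm_form G u)"
    unfolding herm_form_expand by (simp add: mult_ac)
  finally show ?thesis .
qed

lemma herm_form_add: "herm_form (G + H) u = herm_form G u + herm_form H u"
  unfolding herm_form_def cmat_add matrix_vector_mult_add_rdistrib
  by (simp add: sum.distrib algebra_simps)

lemma complex_vector_nonzero_parts:
  "(u :: complex^'n) \<noteq> 0 \<Longrightarrow> (\<chi> i. Re (u $ i)) \<noteq> 0 \<or> (\<chi> i. Im (u $ i)) \<noteq> 0"
  by (auto simp: Finite_Cartesian_Product.vec_eq_iff complex_eq_iff)

lemma herm_form_pos_def:
  assumes "pos_def P" and "u \<noteq> 0"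
  shows "Re (herm_form P u) > 0"
proof -
  have strict: "x \<noteq> 0 \<Longrightarrow> x \<bullet> (P *v x) > 0" for x
    using assms(1) unfolding pos_def_def by blast
  then have "x \<bullet> (P *v x) \<ge> 0" for x
    by (cases "x = 0") (auto intro: less_imp_le)
  with strict show ?thesis
    unfolding Re_herm_form using complex_vector_nonzero_parts[OF assms(2)]
    by (meson add_nonneg_pos add_pos_nonneg)
qed

lemma herm_form_neg_def:
  assumes "neg_def P" and "u \<noteq> 0"
  shows "Re (herm_form P u) < 0"
proof -
  have strict: "x \<noteq> 0 \<Longrightarrow> x \<bullet> (P *v x) < 0" for x
    using assms(1) unfolding neg_def_def by blast
  then have "x \<bullet> (P *v x) \<le> 0" for x
    by (cases "x = 0") (auto intro: less_imp_le)
  with strict show ?thesis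
    unfolding Re_herm_form using complex_vector_nonzero_parts[OF assms(2)]
    by (meson add_neg_nonpos add_nonpos_neg)
qed

lemma lyapunov_imp_hurwitz:
  fixes N P :: "real^'n^'n"
  assumes P: "pos_def P" and neg: "neg_def (N ** P + P ** transpose N)"
  shows "hurwitz N"
  unfolding hurwitz_def
proof (intro allI impI)
  fix c assume "Defs.eigenvalue N c"
  then obtain v where "v \<noteq> 0" and v: "cmat N *v v = c *s v"
    unfolding Defs.eigenvalue_def by auto
  define u where "u = cmat (matrix_inv P) *v v"
  have Pu: "cmat P *v u = v"
    unfolding u_def matrix_vector_mul_assoc cmat_mult[symmetric]
    by (simp add: matrix_inv_right[OF pos_def_invertible[OF P]] cmat_one)
  with \<open>v \<noteq> 0\<close> have "u \<noteq> 0" by auto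
  have "transpose P = P"
    using P unfolding pos_def_def by auto
  then have "Im (herm_form P u) = 0"
    using herm_form_transpose[of P u] by (metis cnj.simps(2) complex_eq_iff neg_equal_zero)
  have NP: "herm_form (N ** P) u = c * herm_form P u"
  proof -
    have "cmat (N ** P) *v u = c *s (cmat P *v u)"
      unfolding cmat_mult matrix_vector_mul_assoc[symmetric] Pu v ..
    then show ?thesis
      unfolding herm_form_def by (simp add: sum_distrib_left mult_ac)
  qed
  have "P ** transpose N = transpose (N ** P)"
    by (simp add: matrix_transpose_mul \<open>transpose P = P\<close>)
  then have "herm_form (P ** transpose N) u = cnj (c * herm_form P u)"
    by (simp only: herm_form_transpose NP)
  then have "Re (herm_form (N ** P + P ** transpose N) u) = 2 * Re c * Re (herm_form P u)"
    unfolding herm_form_add NP using \<open>Im (herm_form P u) = 0\<close> by simp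
  moreover have "Re (herm_form (N ** P + P ** transpose N) u) < 0"
    by (rule herm_form_neg_def[OF neg \<open>u \<noteq> 0\<close>])
  moreover have "Re (herm_form P u) > 0"
    by (rule herm_form_pos_def[OF P \<open>u \<noteq> 0\<close>])
  ultimately show "Re c < 0"
    by (simp add: mult_less_0_iff)
qed

section \<open>The converse Lyapunov theorem\<close>

lemma scaled_diagonal_form:
  fixes b :: "nat \<Rightarrow> nat \<Rightarrow> complex"
  shows "Re (\<Sum>k<n. z k * b k k * of_real (r^(2*k)) * cnj (z k))
           = (\<Sum>k<n. Re (b k k) * (r^k * cmod (z k))\<^sup>2)"
  unfolding Re_sum
proof (intro sum.cong refl)
  fix k
  have "(r^k * cmod (z k))\<^sup>2 = r^(2*k) * (cmod (z k))\<^sup>2"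
    by (metis power_even_eq power_mult_distrib)
  then have eq: "z k * b k k * of_real (r^(2*k)) * cnj (z k) = b k k * of_real ((r^k * cmod (z k))\<^sup>2)"
    by (simp only: of_real_mult complex_norm_square) (simp add: mult_ac)
  show "Re (z k * b k k * of_real (r^(2*k)) * cnj (z k)) = Re (b k k) * (r^k * cmod (z k))\<^sup>2"
    unfolding eq by simp
qed

lemma scaled_strictly_upper_form_bound:
  fixes b :: "nat \<Rightarrow> nat \<Rightarrow> complex"
  assumes r: "0 < r" "r \<le> 1" and C: "\<And>s k. s < n \<Longrightarrow> k < n \<Longrightarrow> cmod (b s k) \<le> C"
  shows "cmod (\<Sum>s<n. \<Sum>k<n. if s < k then z s * b s k * of_real (r^(2*k)) * cnj (z k) else 0)
           \<le> C * r * real n * (\<Sum>k<n. (r^k * cmod (z k))\<^sup>2)"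
proof -
  define u where "u k = r^k * cmod (z k)" for k
  have "cmod (\<Sum>s<n. \<Sum>k<n. if s < k then z s * b s k * of_real (r^(2*k)) * cnj (z k) else 0)
        \<le> (\<Sum>s<n. \<Sum>k<n. C * r * (u s * u k))"
  proof (rule order_trans[OF norm_sum sum_mono[OF order_trans[OF norm_sum sum_mono]]])
    fix s k assume s: "s \<in> {..<n}" and k: "k \<in> {..<n}"
    have "0 \<le> C"
      using C[of s k] s k norm_ge_zero order_trans by blast
    have "r^(2*k) \<le> r * (r^s * r^k)" if "s < k"
      using power_decreasing[of "Suc (s + k)" "2 * k" r] that r by (simp add: power_add)
    then have "cmod (z s) * cmod (b s k) * r^(2*k) * cmod (z k)
                 \<le> cmod (z s) * C * (r * (r^s * r^k)) * cmod (z k)" if "s < k"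
      using C s k that \<open>0 \<le> C\<close> by (intro mult_right_mono mult_left_mono mult_mono) auto
    then show "cmod (if s < k then z s * b s k * of_real (r^(2*k)) * cnj (z k) else 0)
                 \<le> C * r * (u s * u k)"
      using \<open>0 \<le> C\<close> r unfolding u_def by (auto simp: norm_mult norm_power algebra_simps)
  qed
  also have "\<dots> = C * r * (\<Sum>s<n. \<Sum>k<n. u s * u k)"
    by (simp only: sum_distrib_left)
  also have "\<dots> = C * r * (\<Sum>k<n. u k * 1)\<^sup>2"
    by (simp only: power2_eq_square sum_product mult_1_right)
  also have "\<dots> \<le> C * r * ((\<Sum>k<n. (u k)\<^sup>2) * real n)"
  proof (cases "n = 0")
    case False
    then have "0 \<le> C"
      using C[of 0 0] norm_ge_zero order_trans by blast
    then show ?thesis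
      using Cauchy_Schwarz_ineq_sum[of u "\<lambda>_. 1" "{..<n}"] r by (intro mult_left_mono) auto
  qed simp
  finally show ?thesis
    unfolding u_def by (simp add: mult_ac)
qed

lemma upper_triangular_scaled_form_le:
  fixes b :: "nat \<Rightarrow> nat \<Rightarrow> complex"
  assumes upper: "\<And>s k. s < n \<Longrightarrow> k < s \<Longrightarrow> b s k = 0"
    and diag: "\<And>k. k < n \<Longrightarrow> Re (b k k) \<le> - \<alpha>"
    and r: "0 < r" "r \<le> 1" and C: "\<And>s k. s < n \<Longrightarrow> k < n \<Longrightarrow> cmod (b s k) \<le> C"
  shows "Re (\<Sum>s<n. \<Sum>k<n. z s * b s k * of_real (r^(2*k)) * cnj (z k))
           \<le> (C * r * real n - \<alpha>) * (\<Sum>k<n. (r^k * cmod (z k))\<^sup>2)"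
proof -
  define S where "S = (\<Sum>k<n. (r^k * cmod (z k))\<^sup>2)"
  define f where "f s k = z s * b s k * of_real (r^(2*k)) * cnj (z k)" for s k
  have "f s k = (if s = k then f k k else 0) + (if s < k then f s k else 0)" if "s < n" for s k
    using upper[OF that, of k] unfolding f_def by (cases "s = k"; cases "s < k") auto
  then have "(\<Sum>s<n. \<Sum>k<n. f s k)
        = (\<Sum>s<n. \<Sum>k<n. (if s = k then f k k else 0) + (if s < k then f s k else 0))"
    by (intro sum.cong refl) auto
  also have "\<dots> = (\<Sum>k<n. f k k) + (\<Sum>s<n. \<Sum>k<n. if s < k then f s k else 0)"
    by (simp add: sum.distrib)
  finally have split: "(\<Sum>s<n. \<Sum>k<n. f s k)
                        = (\<Sum>k<n. f k k) + (\<Sum>s<n. \<Sum>k<n. if s < k then f s k else 0)" .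
  have "Re (\<Sum>k<n. f k k) \<le> (\<Sum>k<n. - \<alpha> * (r^k * cmod (z k))\<^sup>2)"
    unfolding f_def scaled_diagonal_form using diag by (intro sum_mono mult_right_mono) auto
  then have "Re (\<Sum>k<n. f k k) \<le> - \<alpha> * S"
    unfolding S_def by (simp add: sum_distrib_left)
  moreover have "Re (\<Sum>s<n. \<Sum>k<n. if s < k then f s k else 0) \<le> C * r * real n * S"
    unfolding f_def S_def
    by (rule order_trans[OF complex_Re_le_cmod scaled_strictly_upper_form_bound[OF r C]])
  ultimately have "Re (\<Sum>s<n. \<Sum>k<n. f s k) \<le> (C * r * real n - \<alpha>) * S"
    unfolding split plus_complex.sel by (simp add: left_diff_distrib)
  then show ?thesis
    unfolding f_def S_def .
qed

lemma upper_triangular_scaled_form_neg: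
  fixes b :: "nat \<Rightarrow> nat \<Rightarrow> complex"
  assumes upper: "\<And>s k. s < n \<Longrightarrow> k < s \<Longrightarrow> b s k = 0"
    and diag: "\<And>k. k < n \<Longrightarrow> Re (b k k) < 0"
  shows "\<exists>r > 0. \<forall>z. (\<exists>k<n. z k \<noteq> 0) \<longrightarrow>
           Re (\<Sum>s<n. \<Sum>k<n. z s * b s k * of_real (r^(2*k)) * cnj (z k)) < 0"
proof (cases "n = 0")
  case True
  then show ?thesis by (intro exI[of _ 1]) auto
next
  case False
  define \<alpha> where "\<alpha> = Min ((\<lambda>k. - Re (b k k)) ` {..<n})"
  have "\<alpha> > 0"
    unfolding \<alpha>_def using False diag by (subst Min_gr_iff) auto
  have \<alpha>: "Re (b k k) \<le> - \<alpha>" if "k < n" for k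
  proof -
    have "\<alpha> \<le> - Re (b k k)"
      unfolding \<alpha>_def using that by (intro Min_le) auto
    then show ?thesis by simp
  qed
  define C where "C = Max (insert 1 ((\<lambda>(s, k). cmod (b s k)) ` ({..<n} \<times> {..<n})))"
  have "C \<ge> 1"
    unfolding C_def by (simp add: Max_ge)
  have C: "cmod (b s k) \<le> C" if "s < n" "k < n" for s k
    unfolding C_def using that by (intro Max_ge) auto
  define r where "r = min (1/2) (\<alpha> / (2 * real n * C))"
  have r: "0 < r" "r \<le> 1"
    using \<open>\<alpha> > 0\<close> \<open>C \<ge> 1\<close> False unfolding r_def by auto
  have "C * r * real n \<le> C * (\<alpha> / (2 * real n * C)) * real n"
    using \<open>C \<ge> 1\<close> unfolding r_def by (intro mult_right_mono mult_left_mono) auto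
  then have neg: "C * r * real n - \<alpha> < 0"
    using \<open>C \<ge> 1\<close> \<open>\<alpha> > 0\<close> False by (simp add: field_simps)
  show ?thesis
  proof (intro exI[of _ r] conjI allI impI \<open>0 < r\<close>)
    fix z :: "nat \<Rightarrow> complex"
    assume "\<exists>k<n. z k \<noteq> 0"
    then obtain k0 where "k0 < n" "z k0 \<noteq> 0" by blast
    then have "(\<Sum>k<n. (r^k * cmod (z k))\<^sup>2) > 0"
      using r by (intro sum_pos2[of _ k0]) auto
    with neg have "(C * r * real n - \<alpha>) * (\<Sum>k<n. (r^k * cmod (z k))\<^sup>2) < 0"
      by (rule mult_neg_pos)
    moreover have "Re (\<Sum>s<n. \<Sum>k<n. z s * b s k * of_real (r^(2*k)) * cnj (z k))
                    \<le> (C * r * real n - \<alpha>) * (\<Sum>k<n. (r^k * cmod (z k))\<^sup>2)"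
      by (rule upper_triangular_scaled_form_le) (use upper \<alpha> r C in auto)
    ultimately show "Re (\<Sum>s<n. \<Sum>k<n. z s * b s k * of_real (r^(2*k)) * cnj (z k)) < 0"
      by linarith
  qed
qed

lemma stable_schur_decomposition:
  fixes A :: "complex mat"
  assumes A: "A \<in> carrier_mat n n" and stable: "\<And>e. eigenvalue A e \<Longrightarrow> Re e < 0"
  shows "\<exists>B P Q. B \<in> carrier_mat n n \<and> P \<in> carrier_mat n n \<and> Q \<in> carrier_mat n n \<and>
           P * Q = 1\<^sub>m n \<and> A * P = P * B \<and>
           (\<forall>s<n. \<forall>k<s. B $$ (s,k) = 0) \<and> (\<forall>k<n. Re (B $$ (k,k)) < 0)"
proof -
  obtain es where cp: "char_poly A = (\<Prod>a\<leftarrow>es. [:- a, 1:])"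
    using char_poly_factorized[OF A] by auto
  obtain B P Q where "schur_decomposition A es = (B, P, Q)"
    by (cases "schur_decomposition A es") auto
  from schur_decomposition[OF A cp this]
  have sim: "similar_mat_wit A B P Q" and "upper_triangular B" and diag: "diag_mat B = es"
    by auto
  note wit = similar_mat_witD2[OF A sim]
  have B: "B \<in> carrier_mat n n" and P: "P \<in> carrier_mat n n" and Q: "Q \<in> carrier_mat n n"
    and PQ: "P * Q = 1\<^sub>m n"
    using wit by auto
  have "A * P = P * B * Q * P"
    using wit by simp
  also have "\<dots> = P * B * (Q * P)"
    using P B Q by (simp add: assoc_mult_mat[of _ n n _ n _ n])
  also have "\<dots> = P * B"
    using wit P B by simp
  finally have "A * P = P * B" .
  moreover have "Re (B $$ (k,k)) < 0" if "k < n" for k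
  proof -
    have "B $$ (k,k) \<in> set es"
      using diag[symmetric] that B unfolding diag_mat_def by auto
    moreover have "poly (\<Prod>a\<leftarrow>es. [:- a, 1:]) e = (\<Prod>a\<leftarrow>es. e - a)" for e
      by (induction es) (auto simp: algebra_simps)
    ultimately have "poly (char_poly A) (B $$ (k,k)) = 0"
      unfolding cp by (auto simp: prod_list_zero_iff)
    then show ?thesis
      using eigenvalue_root_char_poly[OF A] stable by blast
  qed
  moreover have "\<forall>s<n. \<forall>k<s. B $$ (s,k) = 0"
    using \<open>upper_triangular B\<close> B unfolding upper_triangular_def by auto
  ultimately show ?thesis
    using B P Q PQ by blast
qed

definition from_idx :: "nat \<Rightarrow> 'n::finite" where
  "from_idx = (SOME f. bij_betw f {..<CARD('n)} UNIV)"

definition to_idx :: "'n::finite \<Rightarrow> nat" where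
  "to_idx = inv_into {..<CARD('n)} from_idx"

lemma bij_betw_from_idx: "bij_betw (from_idx :: nat \<Rightarrow> 'n::finite) {..<CARD('n)} UNIV"
proof -
  obtain h :: "nat \<Rightarrow> 'n" where "bij_betw h {0..<CARD('n)} UNIV"
    using ex_bij_betw_nat_finite[of "UNIV :: 'n set"] by auto
  then have "\<exists>f :: nat \<Rightarrow> 'n. bij_betw f {..<CARD('n)} UNIV"
    by (auto simp: lessThan_atLeast0)
  then show ?thesis
    unfolding from_idx_def by (rule someI_ex)
qed

lemma to_idx_less [simp]: "to_idx (i :: 'n::finite) < CARD('n)"
  unfolding to_idx_def using bij_betw_from_idx[where 'n = 'n]
  by (metis bij_betw_def inv_into_into lessThan_iff UNIV_I)

lemma from_idx_to_idx [simp]: "from_idx (to_idx (i :: 'n::finite)) = i"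
  unfolding to_idx_def using bij_betw_from_idx[where 'n = 'n]
  by (metis bij_betw_def f_inv_into_f UNIV_I)

lemma to_idx_from_idx [simp]: "k < CARD('n::finite) \<Longrightarrow> to_idx (from_idx k :: 'n) = k"
  unfolding to_idx_def using bij_betw_from_idx[where 'n = 'n]
  by (metis bij_betw_def inv_into_f_f lessThan_iff)

lemma sum_UNIV_from_idx: "(\<Sum>i\<in>UNIV. f (i :: 'n::finite)) = (\<Sum>k<CARD('n). f (from_idx k))"
  using sum.reindex_bij_betw[OF bij_betw_from_idx[where 'n = 'n], of f] by simp

definition jnf_cmat :: "real^'n^'n \<Rightarrow> complex mat" where
  "jnf_cmat M = Matrix.mat CARD('n) CARD('n) (\<lambda>(i, j). of_real (M $ from_idx i $ from_idx j))"

text \<open>Reading matrix indices through \<open>from_idx\<close>, \<open>tcoords P u\<close> is the vector \<open>P\<^sup>T u\<close> and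
  \<open>weighted_gram P y\<close> is the real part of \<open>P diag(y) P\<^sup>*\<close>.\<close>

definition tcoords :: "complex mat \<Rightarrow> real^'n \<Rightarrow> nat \<Rightarrow> complex" where
  "tcoords P u k = (\<Sum>a<CARD('n). of_real (u $ from_idx a) * P $$ (a, k))"

definition weighted_gram :: "complex mat \<Rightarrow> (nat \<Rightarrow> real) \<Rightarrow> real^'n^'n" where
  "weighted_gram P y =
     (\<chi> i j. Re (\<Sum>k<CARD('n). P $$ (to_idx i, k) * of_real (y k) * cnj (P $$ (to_idx j, k))))"

lemma mat_mult_entry:
  assumes "A \<in> carrier_mat n n" "B \<in> carrier_mat n n" "i < n" "j < n"
  shows "(A * B) $$ (i, j) = (\<Sum>k<n. A $$ (i, k) * B $$ (k, j))"
  using assms by (simp add: scalar_prod_def lessThan_atLeast0 mult.commute)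

lemma eigenvalue_jnf_cmat:
  fixes M :: "real^'n^'n"
  assumes "eigenvalue (jnf_cmat M) e"
  shows "Defs.eigenvalue M e"
proof -
  let ?n = "CARD('n)"
  obtain v where v: "v \<in> carrier_vec ?n" "v \<noteq> 0\<^sub>v ?n" "jnf_cmat M *\<^sub>v v = e \<cdot>\<^sub>v v"
    using assms unfolding eigenvalue_def eigenvector_def by (auto simp: jnf_cmat_def)
  define w :: "complex^'n" where "w = (\<chi> i. vec_index v (to_idx i))"
  have "v = 0\<^sub>v ?n" if "w = 0"
  proof (rule eq_vecI)
    fix k assume "k < dim_vec (0\<^sub>v ?n)"
    moreover have "w $ from_idx k = 0"
      using that by simp
    ultimately show "vec_index v k = vec_index (0\<^sub>v ?n) k"
      by (simp add: w_def)
  qed (use v in auto)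
  with v have "w \<noteq> 0" by auto
  moreover have "cmat M *v w = e *s w"
  proof (rule Finite_Cartesian_Product.vec_eq_iff[THEN iffD2], rule allI)
    fix i :: 'n
    have "(cmat M *v w) $ i = (\<Sum>k<?n. jnf_cmat M $$ (to_idx i, k) * vec_index v k)"
      unfolding cmat_def matrix_vector_mult_def w_def sum_UNIV_from_idx
      by (auto simp: jnf_cmat_def intro!: sum.cong)
    also have "\<dots> = vec_index (jnf_cmat M *\<^sub>v v) (to_idx i)"
      using v(1) by (simp add: jnf_cmat_def scalar_prod_def lessThan_atLeast0)
    also have "\<dots> = (e *s w) $ i"
      using v(1,3) by (simp add: w_def)
    finally show "(cmat M *v w) $ i = (e *s w) $ i" .
  qed
  ultimately show ?thesis
    unfolding Defs.eigenvalue_def by auto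
qed

lemma inner_weighted_gram:
  "u \<bullet> (weighted_gram P y *v v)
     = Re (\<Sum>k<CARD('n). of_real (y k) * tcoords P u k * cnj (tcoords P v k))"
  for u v :: "real^'n"
proof -
  let ?n = "CARD('n)"
  define F where "F a c k = of_real (y k) * (of_real (u $ from_idx a) * P $$ (a, k))
                              * cnj (of_real (v $ from_idx c) * P $$ (c, k))" for a c k
  have "u \<bullet> (weighted_gram P y *v v) = Re (\<Sum>a<?n. \<Sum>c<?n. \<Sum>k<?n. F a c k)"
    unfolding inner_vec_def weighted_gram_def matrix_vector_mult_def sum_UNIV_from_idx Re_sum F_def
    by (simp add: sum_distrib_left distrib_left mult_ac)
  also have "(\<Sum>a<?n. \<Sum>c<?n. \<Sum>k<?n. F a c k) = (\<Sum>a<?n. \<Sum>k<?n. \<Sum>c<?n. F a c k)"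
    by (intro sum.cong refl sum.swap)
  also have "\<dots> = (\<Sum>k<?n. \<Sum>a<?n. \<Sum>c<?n. F a c k)"
    by (rule sum.swap)
  also have "\<dots> = (\<Sum>k<?n. of_real (y k) * tcoords P u k * cnj (tcoords P v k))"
    unfolding F_def tcoords_def by (simp add: sum_distrib_left sum_distrib_right mult_ac)
  finally show ?thesis .
qed

lemma weighted_gram_symmetric: "transpose (weighted_gram P y) = weighted_gram P y"
  unfolding weighted_gram_def transpose_def Finite_Cartesian_Product.vec_eq_iff
  by (simp add: mult_ac)

lemma tcoords_nonzero:
  assumes P: "P \<in> carrier_mat CARD('n) CARD('n)" and Q: "Q \<in> carrier_mat CARD('n) CARD('n)"
    and PQ: "P * Q = 1\<^sub>m CARD('n)" and "u \<noteq> (0 :: real^'n)"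
  shows "\<exists>k < CARD('n). tcoords P u k \<noteq> 0"
proof (rule ccontr)
  let ?n = "CARD('n)"
  assume "\<not> (\<exists>k<?n. tcoords P u k \<noteq> 0)"
  then have "(\<Sum>k<?n. tcoords P u k * Q $$ (k, j)) = 0" for j
    by simp
  moreover have "(\<Sum>k<?n. tcoords P u k * Q $$ (k, j)) = of_real (u $ from_idx j)" if "j < ?n" for j
  proof -
    have "(\<Sum>k<?n. tcoords P u k * Q $$ (k, j))
          = (\<Sum>a<?n. of_real (u $ from_idx a) * (\<Sum>k<?n. P $$ (a, k) * Q $$ (k, j)))"
      unfolding tcoords_def sum_distrib_right sum_distrib_left
      by (subst sum.swap) (simp add: mult_ac)
    also have "\<dots> = (\<Sum>a<?n. if a = j then of_real (u $ from_idx a) else 0)"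
      using that by (intro sum.cong refl) (simp add: mat_mult_entry[OF P Q, symmetric] PQ)
    finally show ?thesis
      using that by simp
  qed
  ultimately have "u $ i = 0" for i
    by (metis from_idx_to_idx to_idx_less of_real_eq_0_iff)
  then show False
    using \<open>u \<noteq> 0\<close> by (simp add: Finite_Cartesian_Product.vec_eq_iff)
qed

lemma weighted_gram_pos_def:
  assumes "P \<in> carrier_mat CARD('n) CARD('n)" "Q \<in> carrier_mat CARD('n) CARD('n)"
    and "P * Q = 1\<^sub>m CARD('n)" and y: "\<And>k. y k > 0"
  shows "pos_def (weighted_gram P y :: real^'n^'n)"
  unfolding pos_def_def
proof (intro conjI allI impI weighted_gram_symmetric)
  fix x :: "real^'n" assume "x \<noteq> 0"
  then obtain k0 where "k0 < CARD('n)" "tcoords P x k0 \<noteq> 0"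
    using tcoords_nonzero assms by blast
  have "x \<bullet> (weighted_gram P y *v x) = (\<Sum>k<CARD('n). y k * (cmod (tcoords P x k))\<^sup>2)"
    unfolding inner_weighted_gram Re_sum
    by (intro sum.cong refl) (simp add: mult.assoc flip: complex_norm_square)
  also have "\<dots> > 0"
    using \<open>k0 < CARD('n)\<close> \<open>tcoords P x k0 \<noteq> 0\<close> y
    by (intro sum_pos2[of _ k0] mult_nonneg_nonneg less_imp_le[OF y] zero_le_power2) auto
  finally show "x \<bullet> (weighted_gram P y *v x) > 0" .
qed

lemma tcoords_transpose:
  fixes M :: "real^'n^'n"
  assumes P: "P \<in> carrier_mat CARD('n) CARD('n)" and B: "B \<in> carrier_mat CARD('n) CARD('n)"
    and MP: "jnf_cmat M * P = P * B" and "k < CARD('n)"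
  shows "tcoords P (x v* M) k = (\<Sum>s<CARD('n). tcoords P x s * B $$ (s, k))"
proof -
  let ?n = "CARD('n)"
  have M: "jnf_cmat M \<in> carrier_mat ?n ?n"
    by (simp add: jnf_cmat_def)
  have Mx: "(x v* M) $ from_idx a = (\<Sum>c<?n. M $ from_idx c $ from_idx a * x $ from_idx c)" for a
    by (simp add: vector_matrix_mult_def sum_UNIV_from_idx mult.commute)
  have "tcoords P (x v* M) k
        = (\<Sum>a<?n. \<Sum>c<?n. of_real (x $ from_idx c) * (jnf_cmat M $$ (c, a) * P $$ (a, k)))"
    unfolding tcoords_def Mx
    by (intro sum.cong refl) (simp add: sum_distrib_left sum_distrib_right jnf_cmat_def mult_ac)
  also have "\<dots> = (\<Sum>c<?n. of_real (x $ from_idx c) * (\<Sum>a<?n. jnf_cmat M $$ (c, a) * P $$ (a, k)))"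
    by (subst sum.swap) (simp add: sum_distrib_left)
  also have "\<dots> = (\<Sum>c<?n. of_real (x $ from_idx c) * (\<Sum>s<?n. P $$ (c, s) * B $$ (s, k)))"
    using \<open>k < ?n\<close> by (intro sum.cong refl)
      (simp add: mat_mult_entry[OF M P, symmetric] mat_mult_entry[OF P B, symmetric] MP)
  also have "\<dots> = (\<Sum>s<?n. tcoords P x s * B $$ (s, k))"
    unfolding tcoords_def sum_distrib_left sum_distrib_right
    by (subst sum.swap) (simp add: mult_ac)
  finally show ?thesis .
qed

lemma inner_lyapunov_weighted_gram:
  fixes M :: "real^'n^'n"
  assumes P: "P \<in> carrier_mat CARD('n) CARD('n)" and B: "B \<in> carrier_mat CARD('n) CARD('n)"
    and MP: "jnf_cmat M * P = P * B"
  shows "x \<bullet> ((M ** weighted_gram P y + weighted_gram P y ** transpose M) *v x)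
           = 2 * Re (\<Sum>s<CARD('n). \<Sum>k<CARD('n).
                       tcoords P x s * B $$ (s, k) * of_real (y k) * cnj (tcoords P x k))"
proof -
  let ?n = "CARD('n)" and ?G = "weighted_gram P y :: real^'n^'n"
  define x' where "x' = x v* M"
  have "(M ** ?G + ?G ** transpose M) *v x = M *v (?G *v x) + ?G *v x'"
    unfolding x'_def by (simp add: matrix_vector_mult_add_rdistrib flip: matrix_vector_mul_assoc)
  moreover have "x \<bullet> (M *v (?G *v x)) = x' \<bullet> (?G *v x)"
    unfolding x'_def by (simp add: dot_lmul_matrix)
  ultimately have "x \<bullet> ((M ** ?G + ?G ** transpose M) *v x) = x' \<bullet> (?G *v x) + x \<bullet> (?G *v x')"
    by (simp add: inner_add_right)
  also have "\<dots> = 2 * Re (\<Sum>k<?n. of_real (y k) * tcoords P x' k * cnj (tcoords P x k))"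
  proof -
    have "Re (\<Sum>k<?n. of_real (y k) * tcoords P x k * cnj (tcoords P x' k))
          = Re (\<Sum>k<?n. of_real (y k) * tcoords P x' k * cnj (tcoords P x k))"
      unfolding Re_sum by (intro sum.cong refl) (simp add: algebra_simps)
    then show ?thesis
      unfolding inner_weighted_gram by simp
  qed
  also have "(\<Sum>k<?n. of_real (y k) * tcoords P x' k * cnj (tcoords P x k))
      = (\<Sum>k<?n. \<Sum>s<?n. tcoords P x s * B $$ (s, k) * of_real (y k) * cnj (tcoords P x k))"
    unfolding x'_def
    by (intro sum.cong refl) (simp add: tcoords_transpose[OF P B MP] sum_distrib_left sum_distrib_right mult_ac)
  also have "\<dots> = (\<Sum>s<?n. \<Sum>k<?n. tcoords P x s * B $$ (s, k) * of_real (y k) * cnj (tcoords P x k))"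
    by (rule sum.swap)
  finally show ?thesis .
qed

lemma hurwitz_imp_lyapunov:
  fixes M :: "real^'n^'n"
  assumes "hurwitz M"
  shows "\<exists>P. pos_def P \<and> neg_def (M ** P + P ** transpose M)"
proof -
  let ?n = "CARD('n)"
  have carrier: "jnf_cmat M \<in> carrier_mat ?n ?n"
    by (simp add: jnf_cmat_def)
  have stable: "Re e < 0" if "eigenvalue (jnf_cmat M) e" for e
    using assms eigenvalue_jnf_cmat[OF that] unfolding hurwitz_def by blast
  obtain B P Q where B: "B \<in> carrier_mat ?n ?n" and P: "P \<in> carrier_mat ?n ?n"
    and Q: "Q \<in> carrier_mat ?n ?n" and PQ: "P * Q = 1\<^sub>m ?n" and MP: "jnf_cmat M * P = P * B"
    and upper: "\<forall>s<?n. \<forall>k<s. B $$ (s,k) = 0" and diag: "\<forall>k<?n. Re (B $$ (k,k)) < 0"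
    using stable_schur_decomposition[OF carrier stable] by blast
  obtain r where "r > 0" and neg: "\<And>z. \<exists>k<?n. z k \<noteq> 0 \<Longrightarrow>
      Re (\<Sum>s<?n. \<Sum>k<?n. z s * B $$ (s,k) * of_real (r^(2*k)) * cnj (z k)) < 0"
    using upper_triangular_scaled_form_neg[of ?n "\<lambda>s k. B $$ (s,k)"] upper diag by blast
  define G :: "real^'n^'n" where "G = weighted_gram P (\<lambda>k. r^(2*k))"
  have "pos_def G"
    unfolding G_def using P Q PQ \<open>r > 0\<close> by (intro weighted_gram_pos_def) auto
  moreover have "neg_def (M ** G + G ** transpose M)"
    unfolding neg_def_def
  proof (intro conjI allI impI)
    show "transpose (M ** G + G ** transpose M) = M ** G + G ** transpose M"
      by (simp add: G_def transpose_add matrix_transpose_mul weighted_gram_symmetric add.commute)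
    show "x \<bullet> ((M ** G + G ** transpose M) *v x) < 0" if "x \<noteq> 0" for x
      unfolding G_def inner_lyapunov_weighted_gram[OF P B MP]
      using neg[OF tcoords_nonzero[OF P Q PQ that]] by simp
  qed
  ultimately show ?thesis by blast
qed

section \<open>Gains stabilising all systems consistent with the data\<close>

definition outer :: "real^'a \<Rightarrow> real^'b \<Rightarrow> real^'b^'a" where
  "outer c d = (\<chi> i j. c $ i * d $ j)"

lemma outer_mult: "outer c d ** X = outer c (d v* X)"
  unfolding outer_def matrix_matrix_mult_def vector_matrix_mult_def
  by (simp add: Finite_Cartesian_Product.vec_eq_iff sum_distrib_left mult_ac)

lemma outer_add_right: "outer c (a + b) = outer c a + outer c b"
  unfolding outer_def by (simp add: Finite_Cartesian_Product.vec_eq_iff algebra_simps)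

lemma outer_zero_right [simp]: "outer c 0 = 0"
  unfolding outer_def by (simp add: Finite_Cartesian_Product.vec_eq_iff)

lemma outer_mult_vector: "outer c d *v x = (d \<bullet> x) *\<^sub>R c"
  unfolding outer_def matrix_vector_mult_def inner_vec_def
  by (simp add: Finite_Cartesian_Product.vec_eq_iff sum_distrib_left mult_ac)

lemma hurwitz_imp_nonsingular:
  assumes "hurwitz N" and "N *v x = 0"
  shows "x = 0"
proof (rule ccontr)
  assume "x \<noteq> 0"
  then have "(\<chi> i. complex_of_real (x $ i)) \<noteq> 0"
    by (auto simp: Finite_Cartesian_Product.vec_eq_iff)
  moreover have "cmat N *v (\<chi> i. complex_of_real (x $ i)) = 0 *s (\<chi> i. complex_of_real (x $ i))"
    using assms(2) unfolding cmat_def matrix_vector_mult_def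
    by (simp add: Finite_Cartesian_Product.vec_eq_iff flip: of_real_sum of_real_mult)
  ultimately have "Defs.eigenvalue N 0"
    unfolding Defs.eigenvalue_def by blast
  then show False
    using assms(1) unfolding hurwitz_def by fastforce
qed

text \<open>If \<open>r = \<rho>\<^sub>1 + K\<^sup>T \<rho>\<^sub>2 \<noteq> 0\<close>, adding \<open>c \<rho>\<^sub>1\<^sup>T\<close> to \<open>A\<^sub>0\<close> and \<open>c \<rho>\<^sub>2\<^sup>T\<close>
  to \<open>B\<^sub>0\<close> keeps the data equation and adds \<open>c r\<^sup>T\<close> to \<open>A\<^sub>0 + B\<^sub>0 K\<close>; \<open>c\<close> is
  chosen so that \<open>r\<close> becomes a null vector.\<close>

lemma stabilizing_gain_left_kernel_inclusion:
  fixes X :: "real^'l^'n" and U :: "real^'l^'m" and K :: "real^'n^'m"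
  assumes stab: "\<And>A B. A ** X + B ** U = W \<Longrightarrow> hurwitz (A + B ** K)"
    and A0B0: "A0 ** X + B0 ** U = W"
    and \<rho>: "\<rho>1 v* X + \<rho>2 v* U = 0"
  shows "\<rho>1 + \<rho>2 v* K = 0"
proof (rule ccontr)
  define r where "r = \<rho>1 + \<rho>2 v* K"
  assume "r \<noteq> 0"
  define c where "c = (- 1 / (r \<bullet> r)) *\<^sub>R ((A0 + B0 ** K) *v r)"
  define A where "A = A0 + outer c \<rho>1"
  define B where "B = B0 + outer c \<rho>2"
  have "A ** X + B ** U = A0 ** X + B0 ** U + outer c (\<rho>1 v* X + \<rho>2 v* U)"
    unfolding A_def B_def by (simp add: matrix_add_rdistrib outer_mult outer_add_right algebra_simps)
  then have "hurwitz (A + B ** K)"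
    using A0B0 \<rho> by (intro stab) simp
  moreover have "A + B ** K = A0 + B0 ** K + outer c r"
    unfolding A_def B_def r_def
    by (simp add: matrix_add_rdistrib outer_mult outer_add_right algebra_simps vector_matrix_mul_assoc)
  then have "(A + B ** K) *v r = 0"
    using \<open>r \<noteq> 0\<close> by (simp add: matrix_vector_mult_add_rdistrib outer_mult_vector c_def)
  ultimately show False
    using hurwitz_imp_nonsingular \<open>r \<noteq> 0\<close> by blast
qed

lemma in_range_if_orthogonal:
  fixes f :: "'a::euclidean_space \<Rightarrow> 'b::euclidean_space"
  assumes "linear f" and "\<And>w. (\<And>z. w \<bullet> f z = 0) \<Longrightarrow> y \<bullet> w = 0"
  shows "y \<in> range f"
proof -
  have "y \<in> (range f)\<^sup>\<bottom>\<^sup>\<bottom>"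
    unfolding orthogonal_comp_def Linear_Algebra.orthogonal_def
  proof (intro CollectI ballI)
    fix w assume "w \<in> {x. \<forall>y\<in>range f. y \<bullet> x = 0}"
    then have "w \<bullet> f z = 0" for z
      by (simp add: inner_commute)
    then show "w \<bullet> y = 0"
      using assms(2) by (simp add: inner_commute)
  qed
  then show ?thesis
    using orthogonal_comp_self[OF linear_subspace_image[OF assms(1) subspace_UNIV]] by simp
qed

lemma left_kernel_inclusion_imp_range:
  fixes X :: "real^'l^'n" and U :: "real^'l^'m" and K :: "real^'n^'m"
  assumes ker: "\<And>\<rho>1 \<rho>2. \<rho>1 v* X + \<rho>2 v* U = 0 \<Longrightarrow> \<rho>1 + \<rho>2 v* K = 0"
  shows "\<exists>z. X *v z = v \<and> U *v z = K *v v"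
proof -
  define f where "f z = (X *v z, U *v z)" for z
  have "linear f"
    unfolding f_def by (intro linearI) (simp_all add: matrix_vector_right_distrib matrix_vector_mult_scaleR)
  have "(v, K *v v) \<in> range f"
  proof (rule in_range_if_orthogonal[OF \<open>linear f\<close>])
    fix w :: "(real^'n) \<times> (real^'m)"
    assume orth: "\<And>z. w \<bullet> f z = 0"
    obtain \<rho>1 \<rho>2 where w: "w = (\<rho>1, \<rho>2)" by (cases w)
    have "(\<rho>1 v* X + \<rho>2 v* U) \<bullet> z = w \<bullet> f z" for z
      by (simp add: w f_def inner_add_left dot_lmul_matrix inner_Pair)
    then have "(\<rho>1 v* X + \<rho>2 v* U) \<bullet> (\<rho>1 v* X + \<rho>2 v* U) = 0"
      using orth by simp
    then have "\<rho>1 v* X + \<rho>2 v* U = 0"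
      by simp
    then have "\<rho>1 = - (\<rho>2 v* K)"
      using ker by (simp add: eq_neg_iff_add_eq_0)
    moreover have "(K *v v) \<bullet> \<rho>2 = v \<bullet> (\<rho>2 v* K)"
      by (metis dot_lmul_matrix inner_commute)
    ultimately show "(v, K *v v) \<bullet> w = 0"
      by (simp add: w inner_Pair)
  qed
  then show ?thesis
    by (simp add: f_def image_iff) metis
qed

lemma matrix_mult_columns: "A ** (\<chi> i j. z j $ i) = (\<chi> i j. (A *v z j) $ i)"
  by (simp add: matrix_matrix_mult_def matrix_vector_mult_def)

lemma left_kernel_inclusion_imp_right_inverse:
  fixes X :: "real^'l^'n" and U :: "real^'l^'m" and K :: "real^'n^'m"
  assumes ker: "\<And>\<rho>1 \<rho>2. \<rho>1 v* X + \<rho>2 v* U = 0 \<Longrightarrow> \<rho>1 + \<rho>2 v* K = 0"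
  shows "\<exists>\<Theta> :: real^'n^'l. X ** \<Theta> = mat 1 \<and> U ** \<Theta> = K"
proof -
  have "\<exists>z. X *v z = axis j 1 \<and> U *v z = K *v axis j 1" for j
    using ker by (rule left_kernel_inclusion_imp_range)
  then obtain z where z: "\<And>j. X *v z j = axis j 1 \<and> U *v z j = K *v axis j 1"
    by metis
  have "X ** (\<chi> i j. z j $ i) = mat 1"
    using z by (simp add: matrix_mult_columns axis_def Finite_Cartesian_Product.mat_def
        Finite_Cartesian_Product.vec_eq_iff)
  moreover have "U ** (\<chi> i j. z j $ i) = K"
    using z by (simp add: matrix_mult_columns matrix_vector_mult_basis column_def
        Finite_Cartesian_Product.vec_eq_iff)
  ultimately show ?thesis by blast
qed

lemma lmi_gain_stabilizes:
  fixes X :: "real^'l^'n" and U :: "real^'l^'m" and \<theta> :: "real^'n^'l"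
  assumes sym: "X ** \<theta> = transpose (X ** \<theta>)" and pos: "pos_def (X ** \<theta>)"
    and lmi: "neg_def (transpose \<theta> ** transpose W + W ** \<theta>)"
    and AB: "A ** X + B ** U = W"
  shows "hurwitz (A + B ** (U ** \<theta> ** matrix_inv (X ** \<theta>)))"
proof -
  define P where "P = X ** \<theta>"
  define N where "N = A + B ** (U ** \<theta> ** matrix_inv P)"
  have KP: "(U ** \<theta> ** matrix_inv P) ** P = U ** \<theta>"
    using matrix_inv_left[OF pos_def_invertible[OF pos[folded P_def]]]
    by (metis matrix_mul_assoc matrix_mul_rid)
  have "N ** P = A ** P + B ** ((U ** \<theta> ** matrix_inv P) ** P)"
    unfolding N_def by (simp only: matrix_add_rdistrib matrix_mul_assoc)
  also have "\<dots> = (A ** X + B ** U) ** \<theta>"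
    unfolding KP unfolding P_def by (simp only: matrix_add_rdistrib matrix_mul_assoc)
  finally have NP: "N ** P = W ** \<theta>"
    using AB by simp
  then have "transpose \<theta> ** transpose W = P ** transpose N"
    using sym by (metis P_def matrix_transpose_mul)
  then have "neg_def (N ** P + P ** transpose N)"
    using lmi NP by (simp add: add.commute)
  then show ?thesis
    using lyapunov_imp_hurwitz pos unfolding N_def P_def by blast
qed

lemma stabilizing_gain_imp_lmi:
  fixes X :: "real^'l^'n" and U :: "real^'l^'m" and K :: "real^'n^'m"
  assumes stab: "\<And>A B. A ** X + B ** U = W \<Longrightarrow> hurwitz (A + B ** K)"
    and A0B0: "A0 ** X + B0 ** U = W"
  shows "\<exists>\<theta> :: real^'n^'l. X ** \<theta> = transpose (X ** \<theta>) \<and> pos_def (X ** \<theta>) \<and>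
           neg_def (transpose \<theta> ** transpose W + W ** \<theta>)"
proof -
  obtain \<Theta> :: "real^'n^'l" where X\<Theta>: "X ** \<Theta> = mat 1" and U\<Theta>: "U ** \<Theta> = K"
    using left_kernel_inclusion_imp_right_inverse stabilizing_gain_left_kernel_inclusion[OF stab A0B0]
    by blast
  have "A0 + B0 ** K = A0 ** (X ** \<Theta>) + B0 ** (U ** \<Theta>)"
    by (simp add: X\<Theta> U\<Theta>)
  also have "\<dots> = (A0 ** X + B0 ** U) ** \<Theta>"
    by (simp add: matrix_add_rdistrib matrix_mul_assoc)
  finally have W\<Theta>: "W ** \<Theta> = A0 + B0 ** K"
    using A0B0 by simp
  obtain P where P: "pos_def P" and neg: "neg_def ((A0 + B0 ** K) ** P + P ** transpose (A0 + B0 ** K))"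
    using hurwitz_imp_lyapunov stab[OF A0B0] by blast
  have "transpose P = P"
    using P unfolding pos_def_def by auto
  have "X ** (\<Theta> ** P) = P" and W\<Theta>P: "W ** (\<Theta> ** P) = (A0 + B0 ** K) ** P"
    by (simp_all add: matrix_mul_assoc X\<Theta> W\<Theta>)
  moreover have "transpose (\<Theta> ** P) ** transpose W = P ** transpose (A0 + B0 ** K)"
    by (metis W\<Theta>P \<open>transpose P = P\<close> matrix_transpose_mul)
  ultimately show ?thesis
    using P neg \<open>transpose P = P\<close> by (intro exI[of _ "\<Theta> ** P"]) (simp add: add.commute)
qed

lemma Sigma_data_iff:
  "(A, B) \<in> Sigma_data X U V E D11 \<longleftrightarrow> A ** X + B ** U = X ** D11 - E ** V"
  unfolding Sigma_data_def by (auto simp: eq_diff_eq)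

theorem theorem2:
  fixes X :: "real^'l^'n" and U :: "real^'l^'m" and V :: "real^'l^'q"
    and E :: "real^'q^'n" and D11 :: "real^'l^'l"
  assumes nonempty: "Sigma_data X U V E D11 \<noteq> {}"
  shows "((\<exists>K :: real^'n^'m. \<forall>(A, B) \<in> Sigma_data X U V E D11. hurwitz (A + B ** K))
          \<longleftrightarrow> (\<exists>\<theta> :: real^'n^'l. X ** \<theta> = transpose (X ** \<theta>) \<and> pos_def (X ** \<theta>) \<and>
                 neg_def (transpose \<theta> ** transpose (X ** D11 - E ** V) + (X ** D11 - E ** V) ** \<theta>)))
       \<and> (\<forall>\<theta> :: real^'n^'l. (X ** \<theta> = transpose (X ** \<theta>) \<and> pos_def (X ** \<theta>) \<and>
                 neg_def (transpose \<theta> ** transpose (X ** D11 - E ** V) + (X ** D11 - E ** V) ** \<theta>))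
            \<longrightarrow> X ** (\<theta> ** matrix_inv (X ** \<theta>)) = mat 1
              \<and> (\<forall>(A, B) \<in> Sigma_data X U V E D11.
                   hurwitz (A + B ** (U ** \<theta> ** matrix_inv (X ** \<theta>)))))"
proof -
  define W where "W = X ** D11 - E ** V"
  have Sigma: "(A, B) \<in> Sigma_data X U V E D11 \<longleftrightarrow> A ** X + B ** U = W" for A B
    unfolding W_def by (rule Sigma_data_iff)
  obtain A0 B0 where A0B0: "A0 ** X + B0 ** U = W"
    using nonempty Sigma by fast
  have "X ** (\<theta> ** matrix_inv (X ** \<theta>)) = mat 1 \<and>
        (\<forall>(A, B) \<in> Sigma_data X U V E D11. hurwitz (A + B ** (U ** \<theta> ** matrix_inv (X ** \<theta>))))"
    if lmi: "X ** \<theta> = transpose (X ** \<theta>)" "pos_def (X ** \<theta>)"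
      "neg_def (transpose \<theta> ** transpose W + W ** \<theta>)" for \<theta> :: "real^'n^'l"
  proof
    show "X ** (\<theta> ** matrix_inv (X ** \<theta>)) = mat 1"
      using matrix_inv_right[OF pos_def_invertible[OF lmi(2)]] by (simp add: matrix_mul_assoc)
    show "\<forall>(A, B) \<in> Sigma_data X U V E D11. hurwitz (A + B ** (U ** \<theta> ** matrix_inv (X ** \<theta>)))"
    proof clarify
      fix A B assume "(A, B) \<in> Sigma_data X U V E D11"
      then have "A ** X + B ** U = W"
        using Sigma by blast
      then show "hurwitz (A + B ** (U ** \<theta> ** matrix_inv (X ** \<theta>)))"
        by (rule lmi_gain_stabilizes[OF lmi])
    qed
  qed
  moreover have "\<exists>\<theta> :: real^'n^'l. X ** \<theta> = transpose (X ** \<theta>) \<and> pos_def (X ** \<theta>) \<and>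
                   neg_def (transpose \<theta> ** transpose W + W ** \<theta>)"
    if "\<forall>(A, B) \<in> Sigma_data X U V E D11. hurwitz (A + B ** K)" for K :: "real^'n^'m"
    using that Sigma by (intro stabilizing_gain_imp_lmi[OF _ A0B0]) auto
  ultimately show ?thesis
    unfolding W_def by blast
qed

end
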